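(* When the characteristic functions range over $V_{\ge3}$, the competitive ratio of any individually rational (non-wasteful, possibly non-irrevocable) distribution policy cannot exceed $\frac{3\mathsf{min}}{\mathsf{max}}$, whether players act as greedy players or as pessimistic greedy players.
   Context: Players: a finite set $N=\{a_1,\dots,a_n\}$. A characteristic function is $v:2^N\to\mathbb{R}_{\ge 0}$ with $v(\emptyset)=0$. There are fixed, known constants $0<\mathsf{min}\le\mathsf{max}$ and every $v$ considered is monotone and bounded: $\mathsf{min}\le v(S)\le v(T)\le\mathsf{max}$ for all nonempty $S\subseteq T\subseteq N$. For an integer $\delta\ge1$, $V_\delta$ is the set of such $v$ with $\delta\cdot\mathsf{min}\le\mathsf{max}<(\delta+1)\cdot\mathsf{min}$; $V_{\ge3}=\bigcup_{\delta\ge3}V_\delta$. A coalition structure is a partition $C$ of $N$; $\mathsf{SW}(C\mid v)=\sum_{S\in C}v(S)$. Online process: an arrival order is a permutation $\pi=(\pi_1,\dots,\pi_n)$ of $N$; player $\pi_t$ arrives at time $t$. For $S\subseteq N$, $\pi_{|S}$ denotes the players of $S$ in the relative order of $\pi$. Let $C^{t-1}$ be the coalition structure of players arrived before time $t$ ($C^0=\emptyset$). At time $t$, player $\pi_t$ either joins an existing coalition $S\in C^{t-1}$ or forms $\{\pi_t\}$ (choice $S=\emptyset$); decisions are never revised. A distribution policy $\varphi$ assigns to every coalition $S$ with order $\pi_{|S}$ a vector $(\varphi_i(S,\pi_{|S}))_{i\in S}$ with $\sum_{i\in S}\varphi_i=v(S)$. In general (non-irrevocable) policies each share is split as $\varphi_i=\bar\varphi_i+\tilde\varphi_i$,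 where $\bar\varphi_i$ is paid out irrevocably (never reduced later) and $\tilde\varphi_i$ is promised but held in a bank for the coalition and may be redistributed (increased or decreased) when new players join; if nobody joins, $\tilde\varphi_i$ is paid out. Greedy players: $\pi_t$ chooses $S\in C^{t-1}\cup\{\emptyset\}$ maximizing $\varphi_{\pi_t}(S\cup\{\pi_t\},\pi_{|S\cup\{\pi_t\}})$. Pessimistic greedy players instead maximize $\bar\varphi_{\pi_t}(S\cup\{\pi_t\},\pi_{|S\cup\{\pi_t\}})$. Ties are broken by a predetermined rule. $C_g^t$ denotes the structure after time $t$ and $C_g=C_g^n$. Individual rationality: for every $v$ (and $\pi$), every $t\le n$, every $S\in C_g^t$ and every $i\in S$, $\varphi_i(S)\ge v(\{i\})$. The competitive ratio over a class is $\alpha=\inf_{v,\pi}\mathsf{SW}(C_g(v,\pi\mid\varphi))/\max_C\mathsf{SW}(C\mid v)$, over $v$ in the class and all arrival orders $\pi$. *)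

theory Defs
  imports Complex_Main "HOL-Library.Disjoint_Sets"
begin

(* Players are natural numbers; a game is given by a finite player set N and a
   characteristic function v, of which only the values on subsets of N matter. *)
type_synonym game = "nat set \<Rightarrow> real"

(* A share function: sh v xs i = share of player i in the coalition set xs,
   whose members arrived in the order given by the (distinct) list xs. *)
type_synonym share_fn = "game \<Rightarrow> nat list \<Rightarrow> nat \<Rightarrow> real"

(* Predetermined tie-breaking rule: given the game, the current coalition structure,
   the arriving player and the set of maximising options ([] = stay alone),
   it picks one option. *)
type_synonym tie_rule = "game \<Rightarrow> nat list set \<Rightarrow> nat \<Rightarrow> nat list set \<Rightarrow> nat list"

definition bounded_monotone_game :: "real \<Rightarrow> real \<Rightarrow> nat set \<Rightarrow> game \<Rightarrow> bool" where
  "bounded_monotone_game mn mx N v \<longleftrightarrow>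
     v {} = 0 \<and>
     (\<forall>S T. S \<noteq> {} \<and> S \<subseteq> T \<and> T \<subseteq> N \<longrightarrow> mn \<le> v S \<and> v S \<le> v T \<and> v T \<le> mx)"

definition V_delta :: "real \<Rightarrow> real \<Rightarrow> nat \<Rightarrow> nat set \<Rightarrow> game set" where
  "V_delta mn mx \<delta> N =
     {v. bounded_monotone_game mn mx N v \<and> real \<delta> * mn \<le> mx \<and> mx < (real \<delta> + 1) * mn}"

definition V_ge3 :: "real \<Rightarrow> real \<Rightarrow> nat set \<Rightarrow> game set" where
  "V_ge3 mn mx N = (\<Union>\<delta>\<in>{3..}. V_delta mn mx \<delta> N)"

definition arrival_order :: "nat set \<Rightarrow> nat list \<Rightarrow> bool" where
  "arrival_order N \<pi> \<longleftrightarrow> distinct \<pi> \<and> set \<pi> = N"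

definition total_share :: "share_fn \<Rightarrow> share_fn \<Rightarrow> share_fn" where
  "total_share phibar phitilde = (\<lambda>v xs i. phibar v xs i + phitilde v xs i)"

definition non_wasteful :: "real \<Rightarrow> real \<Rightarrow> share_fn \<Rightarrow> bool" where
  "non_wasteful mn mx phi \<longleftrightarrow>
     (\<forall>N v xs. finite N \<and> bounded_monotone_game mn mx N v \<and> distinct xs \<and> xs \<noteq> [] \<and> set xs \<subseteq> N
        \<longrightarrow> (\<Sum>i\<in>set xs. phi v xs i) = v (set xs))"

(* general (possibly non-irrevocable) policy phi = phibar + phitilde, where the
   irrevocably paid part phibar is never reduced when a new player joins *)
definition general_policy :: "real \<Rightarrow> real \<Rightarrow> share_fn \<Rightarrow> share_fn \<Rightarrow> bool" where
  "general_policy mn mx phibar phitilde \<longleftrightarrow>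
     non_wasteful mn mx (total_share phibar phitilde) \<and>
     (\<forall>N v xs j. finite N \<and> bounded_monotone_game mn mx N v \<and> distinct (xs @ [j]) \<and> xs \<noteq> []
        \<and> set (xs @ [j]) \<subseteq> N \<longrightarrow> (\<forall>i\<in>set xs. phibar v xs i \<le> phibar v (xs @ [j]) i))"

definition valid_tie_rule :: "tie_rule \<Rightarrow> bool" where
  "valid_tie_rule tie \<longleftrightarrow> (\<forall>v C p M. M \<noteq> {} \<longrightarrow> tie v C p M \<in> M)"

(* one step: the arriving player p maximises sel (phi for greedy players,
   phibar for pessimistic greedy players); coalitions are lists in arrival order *)
definition greedy_step :: "share_fn \<Rightarrow> tie_rule \<Rightarrow> game \<Rightarrow> nat list set \<Rightarrow> nat \<Rightarrow> nat list set" where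
  "greedy_step sel tie v C p =
     (let opts = insert [] C;
          M = {S \<in> opts. \<forall>S'\<in>opts. sel v (S' @ [p]) p \<le> sel v (S @ [p]) p};
          S = tie v C p M
      in if S = [] then insert [p] C else insert (S @ [p]) (C - {S}))"

definition greedy_run :: "share_fn \<Rightarrow> tie_rule \<Rightarrow> game \<Rightarrow> nat list \<Rightarrow> nat list set" where
  "greedy_run sel tie v \<pi> = foldl (greedy_step sel tie v) {} \<pi>"

definition SW :: "game \<Rightarrow> nat list set \<Rightarrow> real" where
  "SW v C = (\<Sum>S\<in>C. v (set S))"

definition opt_SW :: "nat set \<Rightarrow> game \<Rightarrow> real" where
  "opt_SW N v = Max {(\<Sum>S\<in>P. v S) | P. partition_on N P}"

definition individually_rational :: "real \<Rightarrow> real \<Rightarrow> share_fn \<Rightarrow> share_fn \<Rightarrow> tie_rule \<Rightarrow> bool" where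
  "individually_rational mn mx phi sel tie \<longleftrightarrow>
     (\<forall>N v \<pi> t. finite N \<and> bounded_monotone_game mn mx N v \<and> arrival_order N \<pi> \<and> t \<le> length \<pi>
        \<longrightarrow> (\<forall>S\<in>greedy_run sel tie v (take t \<pi>). \<forall>i\<in>set S. v {i} \<le> phi v S i))"

definition competitive_ratio :: "real \<Rightarrow> real \<Rightarrow> share_fn \<Rightarrow> tie_rule \<Rightarrow> real" where
  "competitive_ratio mn mx sel tie =
     Inf {SW v (greedy_run sel tie v \<pi>) / opt_SW N v | N v \<pi>.
            finite N \<and> N \<noteq> {} \<and> v \<in> V_ge3 mn mx N \<and> arrival_order N \<pi>}"

end

theory Submission
  imports Defs
begin

(* Three players, every nonempty coalition is worth mn except the grand coalition, worth mx.
   Two players forming a pair would each be owed at least their stand-alone value mn by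
   individual rationality, 2 mn in total, while the pair is only worth mn.  So greedy
   players never pair up, hence never reach the grand coalition either, and the welfare
   is 3 mn against an optimum of at least mx.  The argument never looks at what the players
   maximise, so it covers greedy and pessimistic greedy players alike. *)

lemma greedy_step_cases:
  assumes "valid_tie_rule tie" and "finite C"
  obtains "greedy_step sel tie v C p = insert [p] C"
    | S where "S \<in> C" and "greedy_step sel tie v C p = insert (S @ [p]) (C - {S})"
proof -
  define opts where "opts = insert [] C"
  define gain where "gain = (\<lambda>S. sel v (S @ [p]) p)"
  define M where "M = {S \<in> opts. \<forall>S'\<in>opts. gain S' \<le> gain S}"
  define S where "S = tie v C p M"
  have "finite opts" "opts \<noteq> {}"
    using \<open>finite C\<close> by (auto simp: opts_def)
  then obtain best where "best \<in> opts" "gain best = Max (gain ` opts)"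
    by (metis (mono_tags, lifting) Max_in finite_imageI image_iff image_is_empty)
  with \<open>finite opts\<close> have "best \<in> M"
    by (simp add: M_def)
  then have "S \<in> M"
    using assms(1) unfolding S_def valid_tie_rule_def by blast
  then have "S \<in> opts"
    by (simp add: M_def)
  moreover have "greedy_step sel tie v C p =
      (if S = [] then insert [p] C else insert (S @ [p]) (C - {S}))"
    unfolding greedy_step_def Let_def S_def M_def opts_def gain_def by simp
  ultimately show thesis
    using that by (cases "S = []") (auto simp: opts_def)
qed

lemma greedy_run_snoc:
  "greedy_run sel tie v (xs @ [p]) = greedy_step sel tie v (greedy_run sel tie v xs) p"
  by (simp add: greedy_run_def)

lemma finite_greedy_run:
  assumes "valid_tie_rule tie"
  shows "finite (greedy_run sel tie v \<pi>)"
proof (induction \<pi> rule: rev_induct)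
  case Nil
  then show ?case by (simp add: greedy_run_def)
next
  case (snoc p xs)
  then show ?case
    by (cases rule: greedy_step_cases[OF assms snoc, of sel v p]) (simp_all add: greedy_run_snoc)
qed

lemma greedy_run_subset:
  assumes "valid_tie_rule tie" and "S \<in> greedy_run sel tie v \<pi>"
  shows "set S \<subseteq> set \<pi>"
  using assms(2)
proof (induction \<pi> arbitrary: S rule: rev_induct)
  case Nil
  then show ?case by (simp add: greedy_run_def)
next
  case (snoc p xs)
  have IH: "set S' \<subseteq> set xs" if "S' \<in> greedy_run sel tie v xs" for S'
    using snoc.IH that .
  show ?case
  proof (cases rule: greedy_step_cases[OF assms(1) finite_greedy_run[OF assms(1), of sel v xs], of sel v p])
    case 1
    then have "S = [p] \<or> S \<in> greedy_run sel tie v xs"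
      using snoc.prems by (simp add: greedy_run_snoc)
    then show ?thesis using IH by auto
  next
    case (2 S')
    then have "S = S' @ [p] \<or> S \<in> greedy_run sel tie v xs"
      using snoc.prems by (auto simp: greedy_run_snoc)
    then show ?thesis using IH IH[OF \<open>S' \<in> greedy_run sel tie v xs\<close>] by auto
  qed
qed

lemma greedy_run_eq_singletons:
  assumes "valid_tie_rule tie" and "distinct \<pi>"
    and "\<And>t i j. t \<le> length \<pi> \<Longrightarrow> i \<in> set \<pi> \<Longrightarrow> j \<in> set \<pi> \<Longrightarrow> i \<noteq> j
                   \<Longrightarrow> [i, j] \<notin> greedy_run sel tie v (take t \<pi>)"
  shows "greedy_run sel tie v \<pi> = (\<lambda>i. [i]) ` set \<pi>"
  using assms(2,3)
proof (induction \<pi> rule: rev_induct)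
  case Nil
  then show ?case by (simp add: greedy_run_def)
next
  case (snoc p xs)
  have IH: "greedy_run sel tie v xs = (\<lambda>i. [i]) ` set xs"
  proof (rule snoc.IH)
    show "distinct xs" using snoc.prems(1) by simp
    fix t i j assume "t \<le> length xs" "i \<in> set xs" "j \<in> set xs" "i \<noteq> j"
    then show "[i, j] \<notin> greedy_run sel tie v (take t xs)"
      using snoc.prems(2)[of t i j] by simp
  qed
  show ?case
  proof (cases rule: greedy_step_cases[OF assms(1) finite_greedy_run[OF assms(1), of sel v xs], of sel v p])
    case 1
    then show ?thesis using IH by (simp add: greedy_run_snoc)
  next
    case (2 S)
    then obtain i where "i \<in> set xs" "S = [i]" using IH by auto
    moreover have "p \<notin> set xs" using snoc.prems(1) by simp
    ultimately have "[i, p] \<notin> greedy_run sel tie v (xs @ [p])"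
      using snoc.prems(2)[of "length (xs @ [p])" i p] by auto
    with 2 \<open>S = [i]\<close> show ?thesis by (simp add: greedy_run_snoc)
  qed
qed

lemma SW_singletons: "SW v ((\<lambda>i. [i]) ` A) = (\<Sum>i\<in>A. v {i})"
  by (simp add: SW_def sum.reindex inj_on_def)

lemma SW_greedy_run_nonneg:
  assumes "valid_tie_rule tie" and "0 \<le> mn" and "bounded_monotone_game mn mx N v"
    and "set \<pi> \<subseteq> N"
  shows "0 \<le> SW v (greedy_run sel tie v \<pi>)"
  unfolding SW_def
proof (rule sum_nonneg)
  fix S assume "S \<in> greedy_run sel tie v \<pi>"
  then have "set S \<subseteq> N"
    using greedy_run_subset[OF assms(1)] assms(4) by blast
  show "0 \<le> v (set S)"
  proof (cases "set S = {}")
    case True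
    then show ?thesis using assms(3) by (simp add: bounded_monotone_game_def)
  next
    case False
    then have "mn \<le> v (set S)"
      using \<open>set S \<subseteq> N\<close> assms(3) unfolding bounded_monotone_game_def by blast
    with assms(2) show ?thesis by linarith
  qed
qed

lemma opt_SW_ge_grand_coalition:
  assumes "finite N" and "N \<noteq> {}"
  shows "v N \<le> opt_SW N v"
proof -
  have "{P. partition_on N P} \<subseteq> Pow (Pow N)"
    by (auto simp: partition_on_def)
  then have "finite ((\<lambda>P. \<Sum>S\<in>P. v S) ` {P. partition_on N P})"
    using assms(1) by (simp add: finite_subset)
  moreover have "v N \<in> (\<lambda>P. \<Sum>S\<in>P. v S) ` {P. partition_on N P}"
    using partition_on_space[OF assms(2)] by (intro image_eqI[of _ _ "{N}"]) simp_all
  ultimately show ?thesis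
    unfolding opt_SW_def by (simp add: setcompr_eq_image)
qed

lemma in_V_ge3:
  assumes "0 < mn" and "3 * mn \<le> mx" and "bounded_monotone_game mn mx N v"
  shows "v \<in> V_ge3 mn mx N"
proof -
  define \<delta> where "\<delta> = nat \<lfloor>mx / mn\<rfloor>"
  have "3 \<le> mx / mn"
    using assms(1,2) by (simp add: field_simps)
  then have "3 \<le> \<delta>" and "real \<delta> \<le> mx / mn" and "mx / mn < real \<delta> + 1"
    unfolding \<delta>_def by linarith+
  then have "real \<delta> * mn \<le> mx" and "mx < (real \<delta> + 1) * mn"
    using assms(1) by (simp_all add: field_simps)
  with \<open>3 \<le> \<delta>\<close> assms(3) show ?thesis
    unfolding V_ge3_def V_delta_def by auto
qed

lemma competitive_ratio_le:
  assumes "valid_tie_rule tie" and "0 \<le> mn"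
    and "finite N" and "N \<noteq> {}" and "v \<in> V_ge3 mn mx N" and "arrival_order N \<pi>"
  shows "competitive_ratio mn mx sel tie \<le> SW v (greedy_run sel tie v \<pi>) / opt_SW N v"
  unfolding competitive_ratio_def
proof (rule cInf_lower)
  show "SW v (greedy_run sel tie v \<pi>) / opt_SW N v \<in>
      {SW v (greedy_run sel tie v \<pi>) / opt_SW N v | N v \<pi>.
         finite N \<and> N \<noteq> {} \<and> v \<in> V_ge3 mn mx N \<and> arrival_order N \<pi>}"
    using assms(3-6) by blast
  show "bdd_below {SW v (greedy_run sel tie v \<pi>) / opt_SW N v | N v \<pi>.
         finite N \<and> N \<noteq> {} \<and> v \<in> V_ge3 mn mx N \<and> arrival_order N \<pi>}"
  proof (rule bdd_belowI, clarify)
    fix N' v' \<pi>'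
    assume "finite N'" "N' \<noteq> {}" "v' \<in> V_ge3 mn mx N'" "arrival_order N' \<pi>'"
    then have game: "bounded_monotone_game mn mx N' v'" and "set \<pi>' = N'"
      by (auto simp: V_ge3_def V_delta_def arrival_order_def)
    have "0 \<le> SW v' (greedy_run sel tie v' \<pi>')"
      using SW_greedy_run_nonneg[OF assms(1,2) game] \<open>set \<pi>' = N'\<close> by simp
    moreover have "mn \<le> v' N'"
      using game \<open>N' \<noteq> {}\<close> by (auto simp: bounded_monotone_game_def)
    then have "0 \<le> opt_SW N' v'"
      using opt_SW_ge_grand_coalition[OF \<open>finite N'\<close> \<open>N' \<noteq> {}\<close>, of v'] assms(2) by linarith
    ultimately show "0 \<le> SW v' (greedy_run sel tie v' \<pi>') / opt_SW N' v'"
      by simp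
  qed
qed

lemma individually_rational_stand_alone_le:
  assumes "non_wasteful mn mx phi" and "individually_rational mn mx phi sel tie"
    and "finite N" and "bounded_monotone_game mn mx N v" and "arrival_order N \<pi>"
    and "t \<le> length \<pi>" and "S \<in> greedy_run sel tie v (take t \<pi>)"
    and "distinct S" and "S \<noteq> []" and "set S \<subseteq> N"
  shows "(\<Sum>i\<in>set S. v {i}) \<le> v (set S)"
proof -
  have "(\<Sum>i\<in>set S. v {i}) \<le> (\<Sum>i\<in>set S. phi v S i)"
    using assms(2-7) unfolding individually_rational_def by (intro sum_mono) blast
  also have "\<dots> = v (set S)"
    using assms(1,3,4,8-10) unfolding non_wasteful_def by blast
  finally show ?thesis .
qed

definition grand_coalition_game :: "real \<Rightarrow> real \<Rightarrow> nat set \<Rightarrow> game" where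
  "grand_coalition_game mn mx N = (\<lambda>S. if S = {} then 0 else if S = N then mx else mn)"

lemma bounded_monotone_grand_coalition_game:
  assumes "mn \<le> mx"
  shows "bounded_monotone_game mn mx N (grand_coalition_game mn mx N)"
  using assms by (auto simp: bounded_monotone_game_def grand_coalition_game_def)

lemma greedy_run_grand_coalition_game:
  fixes sel phi :: share_fn
  assumes "0 < mn" and "mn \<le> mx"
    and "non_wasteful mn mx phi" and "valid_tie_rule tie"
    and "individually_rational mn mx phi sel tie"
    and "finite N" and "3 \<le> card N" and "arrival_order N \<pi>"
  shows "greedy_run sel tie (grand_coalition_game mn mx N) \<pi> = (\<lambda>i. [i]) ` N"
proof -
  let ?v = "grand_coalition_game mn mx N"
  have "set \<pi> = N" "distinct \<pi>"
    using assms(8) by (simp_all add: arrival_order_def)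
  have game: "bounded_monotone_game mn mx N ?v"
    using assms(2) by (rule bounded_monotone_grand_coalition_game)
  have "[i, j] \<notin> greedy_run sel tie ?v (take t \<pi>)"
    if "t \<le> length \<pi>" "i \<in> set \<pi>" "j \<in> set \<pi>" "i \<noteq> j" for t i j
  proof
    assume "[i, j] \<in> greedy_run sel tie ?v (take t \<pi>)"
    moreover have "distinct [i, j]" "set [i, j] \<subseteq> N"
      using that \<open>set \<pi> = N\<close> by auto
    ultimately have "(\<Sum>k\<in>set [i, j]. ?v {k}) \<le> ?v (set [i, j])"
      using individually_rational_stand_alone_le[OF assms(3,5,6) game assms(8) \<open>t \<le> length \<pi>\<close>]
      by blast
    moreover have "{i} \<noteq> N" "{j} \<noteq> N" "{i, j} \<noteq> N"
      using assms(7) \<open>i \<noteq> j\<close> by auto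
    ultimately show False
      using assms(1) \<open>i \<noteq> j\<close> by (simp add: grand_coalition_game_def)
  qed
  then show ?thesis
    using greedy_run_eq_singletons[OF assms(4) \<open>distinct \<pi>\<close>] \<open>set \<pi> = N\<close> by simp
qed

lemma competitive_ratio_le_three_min_div_max:
  fixes sel phi :: share_fn
  assumes "0 < mn" and "3 * mn \<le> mx"
    and "non_wasteful mn mx phi" and "valid_tie_rule tie"
    and "individually_rational mn mx phi sel tie"
  shows "competitive_ratio mn mx sel tie \<le> 3 * mn / mx"
proof -
  define N :: "nat set" where "N = {0, 1, 2}"
  define \<pi> :: "nat list" where "\<pi> = [0, 1, 2]"
  define v where "v = grand_coalition_game mn mx N"
  have "finite N" "N \<noteq> {}" "card N = 3"
    by (simp_all add: N_def)
  have order: "arrival_order N \<pi>"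
    by (auto simp: arrival_order_def N_def \<pi>_def)
  have game: "bounded_monotone_game mn mx N v"
    unfolding v_def using assms(1,2) by (intro bounded_monotone_grand_coalition_game) simp
  have "greedy_run sel tie v \<pi> = (\<lambda>i. [i]) ` N"
    unfolding v_def using assms \<open>finite N\<close> \<open>card N = 3\<close> order
    by (intro greedy_run_grand_coalition_game) simp_all
  then have welfare: "SW v (greedy_run sel tie v \<pi>) = 3 * mn"
    by (simp only: SW_singletons) (simp add: N_def v_def grand_coalition_game_def)
  have "mx \<le> opt_SW N v"
    using opt_SW_ge_grand_coalition[OF \<open>finite N\<close> \<open>N \<noteq> {}\<close>, of v] \<open>N \<noteq> {}\<close>
    by (simp add: v_def grand_coalition_game_def)
  have "competitive_ratio mn mx sel tie \<le> SW v (greedy_run sel tie v \<pi>) / opt_SW N v"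
    using competitive_ratio_le[OF assms(4) _ \<open>finite N\<close> \<open>N \<noteq> {}\<close> in_V_ge3[OF assms(1,2) game] order]
      assms(1) by simp
  also have "\<dots> \<le> 3 * mn / mx"
    unfolding welfare using \<open>mx \<le> opt_SW N v\<close> assms(1,2) by (intro divide_left_mono) auto
  finally show ?thesis .
qed

theorem theorem7:
  fixes mn mx :: real and phibar phitilde :: share_fn and tie :: tie_rule
  assumes "0 < mn" and "3 * mn \<le> mx"
    and "general_policy mn mx phibar phitilde"
    and "valid_tie_rule tie"
  shows "(individually_rational mn mx (total_share phibar phitilde) (total_share phibar phitilde) tie
           \<longrightarrow> competitive_ratio mn mx (total_share phibar phitilde) tie \<le> 3 * mn / mx)
       \<and> (individually_rational mn mx (total_share phibar phitilde) phibar tie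
           \<longrightarrow> competitive_ratio mn mx phibar tie \<le> 3 * mn / mx)"
proof -
  have "non_wasteful mn mx (total_share phibar phitilde)"
    using assms(3) unfolding general_policy_def by blast
  then show ?thesis
    using competitive_ratio_le_three_min_div_max[OF assms(1,2) _ assms(4)] by blast
qed

end
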